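(* Let $d,k$ be positive integers, let $\mathscr{A}\subseteq\mathbb{R}^d$, $\mathscr{B}\subseteq\mathbb{R}^k$, let $\boldsymbol{f}:\mathscr{A}\to\mathbb{R}^k$ and let $g:\mathscr{A}\to\mathbb{R}$. Let $X$ be a random vector in $\mathbb{R}^d$ such that $\Pr\{X\in\mathscr{A}\}=1$, $\mathbb{E}[\boldsymbol{f}(X)]$ exists and $\mathbb{E}[\boldsymbol{f}(X)]\in\mathscr{B}$, and such that $\mathbb{E}[g(X)]$ exists (as a finite real number). Let $\mathscr{Y}$ be the family of all discrete random vectors $Y$ in $\mathbb{R}^d$ such that $\Pr\{Y\in\mathscr{A}\}=1$, $\mathbb{E}[\boldsymbol{f}(Y)]\in\mathscr{B}$, and $Y$ has at most $k+1$ distinct possible values. Then \[ \mathbb{E}[g(X)]\le \sup_{Y\in\mathscr{Y}}\mathbb{E}[g(Y)]. \]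
   Context: A vector $x$ is a possible value of a discrete random vector $Y$ if $\Pr\{Y=x\}>0$. All sets and functions involved are assumed measurable so that the probabilities and expectations make sense. The supremum of an empty set is defined to be $0$. *)

theory Defs
  imports "HOL-Probability.Probability"
begin

definition sup0 :: "ereal set \<Rightarrow> ereal" where
  "sup0 S = (if S = {} then 0 else Sup S)"

text \<open>Distributions of discrete random vectors Y in R^d with Pr{Y in A} = 1,
  E[f(Y)] in B and at most k+1 distinct possible values. Possible values are
  exactly the points of the support set_pmf.\<close>
definition admissible_dists ::
  "('d::finite) itself \<Rightarrow> nat \<Rightarrow> (real^'d) set \<Rightarrow> (real^'k::finite) set \<Rightarrow>
   (real^'d \<Rightarrow> real^'k) \<Rightarrow> (real^'d) pmf set" where
  "admissible_dists _ k A B f =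
     {p. finite (set_pmf p) \<and> card (set_pmf p) \<le> k + 1 \<and> set_pmf p \<subseteq> A
         \<and> measure_pmf.expectation p f \<in> B}"

end

theory Submission
  imports Defs
begin

text \<open>The random point \<open>(f X, g X)\<close> has mean \<open>(E f(X), E g(X))\<close>, and a mean lies in the
  convex hull of the set of values taken almost surely, here the image of \<open>A\<close> under
  \<open>x \<mapsto> (f x, g x)\<close>. So \<open>(E f(X), E g(X))\<close> is a finite convex combination of points
  \<open>(f x\<^sub>i, g x\<^sub>i)\<close> with \<open>x\<^sub>i \<in> A\<close>. As long as more than \<open>k + 1\<close> points carry weight, the
  \<open>f x\<^sub>i\<close> are affinely dependent; moving the weights along such a dependence, in the direction
  that does not decrease the \<open>g\<close>-average, until one weight vanishes keeps the \<open>f\<close>-mean fixed.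
  The final weights are the law of an admissible \<open>Y\<close> with \<open>E g(Y) \<ge> E g(X)\<close>.\<close>

lemma supporting_hyperplane_not_rel_interior:
  fixes C :: "'a::euclidean_space set"
  assumes "convex C" and "m \<notin> rel_interior C"
  obtains a where "\<And>y. y \<in> C \<Longrightarrow> a \<bullet> m \<le> a \<bullet> y"
    and "\<And>y. y \<in> rel_interior C \<Longrightarrow> a \<bullet> m < a \<bullet> y"
proof (cases "m \<in> closure C")
  case True
  then show ?thesis
    using supporting_hyperplane_relative_frontier[OF assms(1) True assms(2)] that closure_subset
    by (metis subsetD)
next
  case False
  then obtain a b where "a \<bullet> m < b" and "\<forall>y\<in>closure C. b < a \<bullet> y"
    using separating_hyperplane_closed_point[OF convex_closure[OF assms(1)] closed_closure] by blast
  then show ?thesis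
    using that closure_subset rel_interior_subset by (metis less_imp_le less_trans subsetD)
qed

lemma aff_dim_Int_hyperplane_less:
  fixes S :: "'a::euclidean_space set"
  assumes "s \<in> S" and "a \<bullet> s \<noteq> b"
  shows "aff_dim (S \<inter> {y. a \<bullet> y = b}) < aff_dim S"
proof (rule aff_dim_psubset)
  have "affine hull (S \<inter> {y. a \<bullet> y = b}) \<subseteq> {y. a \<bullet> y = b}"
    by (intro hull_minimal) (auto simp: affine_hyperplane)
  with assms have "s \<notin> affine hull (S \<inter> {y. a \<bullet> y = b})" by blast
  moreover have "s \<in> affine hull S" using assms(1) by (rule hull_inc)
  moreover have "affine hull (S \<inter> {y. a \<bullet> y = b}) \<subseteq> affine hull S" by (intro hull_mono) auto
  ultimately show "affine hull (S \<inter> {y. a \<bullet> y = b}) \<subset> affine hull S" by blast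
qed

text \<open>If the mean \<open>m\<close> were outside \<open>convex hull S\<close>, a supporting hyperplane at \<open>m\<close> would
  carry almost all of \<open>Z\<close>, but not all of \<open>S\<close>; this lowers the affine dimension of \<open>S\<close>.\<close>

lemma integral_in_convex_hull:
  fixes Z :: "'a \<Rightarrow> 'n::euclidean_space"
  assumes "prob_space M" and "integrable M Z" and "AE \<omega> in M. Z \<omega> \<in> S"
  shows "integral\<^sup>L M Z \<in> convex hull S"
  using assms(3)
proof (induction S rule: measure_induct_rule[where f="\<lambda>S. nat (aff_dim S + 1)"])
  case (less S)
  interpret prob_space M by fact
  define m where "m = integral\<^sup>L M Z"
  define C where "C = convex hull S"
  have "convex C" and "S \<subseteq> C" by (simp_all add: C_def hull_subset)
  show ?case
  proof (rule ccontr)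
    assume "integral\<^sup>L M Z \<notin> convex hull S"
    then have "m \<notin> C" by (simp add: m_def C_def)
    then obtain a where a_le: "\<And>y. y \<in> C \<Longrightarrow> a \<bullet> m \<le> a \<bullet> y"
      and a_less: "\<And>y. y \<in> rel_interior C \<Longrightarrow> a \<bullet> m < a \<bullet> y"
      using supporting_hyperplane_not_rel_interior[OF \<open>convex C\<close>] rel_interior_subset by blast
    have nonneg: "AE \<omega> in M. 0 \<le> a \<bullet> Z \<omega> - a \<bullet> m"
      using less.prems by eventually_elim (use a_le \<open>S \<subseteq> C\<close> in auto)
    have "(\<integral>\<omega>. a \<bullet> Z \<omega> - a \<bullet> m \<partial>M) = 0"
      using assms(2) by (simp add: m_def prob_space)
    then have "AE \<omega> in M. a \<bullet> Z \<omega> - a \<bullet> m = 0"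
      using integral_nonneg_eq_0_iff_AE[OF _ nonneg] assms(2) by simp
    with less.prems have AE_S': "AE \<omega> in M. Z \<omega> \<in> S \<inter> {y. a \<bullet> y = a \<bullet> m}"
      by eventually_elim auto
    have "S \<noteq> {}"
      using less.prems by (auto simp: AE_False)
    then obtain y0 where y0: "y0 \<in> rel_interior C"
      using rel_interior_eq_empty[OF \<open>convex C\<close>] \<open>S \<subseteq> C\<close> by blast
    have "\<not> S \<subseteq> {y. a \<bullet> y = a \<bullet> m}"
    proof
      assume "S \<subseteq> {y. a \<bullet> y = a \<bullet> m}"
      then have "C \<subseteq> {y. a \<bullet> y = a \<bullet> m}"
        unfolding C_def by (intro hull_minimal) (auto simp: convex_hyperplane)
      then show False using y0 a_less[OF y0] rel_interior_subset by fastforce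
    qed
    then obtain s where "s \<in> S" and "a \<bullet> s \<noteq> a \<bullet> m" by blast
    then have "aff_dim (S \<inter> {y. a \<bullet> y = a \<bullet> m}) < aff_dim S"
      by (rule aff_dim_Int_hyperplane_less)
    then have "m \<in> convex hull (S \<inter> {y. a \<bullet> y = a \<bullet> m})"
      using less.IH[OF _ AE_S'] aff_dim_geq[of "S \<inter> {y. a \<bullet> y = a \<bullet> m}"] by (simp add: m_def)
    moreover have "convex hull (S \<inter> {y. a \<bullet> y = a \<bullet> m}) \<subseteq> C"
      unfolding C_def by (intro hull_mono) auto
    ultimately show False using \<open>m \<notin> C\<close> by blast
  qed
qed

lemma exists_affine_dependence:
  fixes F :: "'x \<Rightarrow> 'v::euclidean_space"
  assumes "finite P" and "DIM('v) + 1 < card P"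
  obtains \<mu> where "sum \<mu> P = 0" and "(\<Sum>x\<in>P. \<mu> x *\<^sub>R F x) = 0" and "\<exists>x\<in>P. \<mu> x \<noteq> 0"
proof (cases "inj_on (\<lambda>x. (F x, 1::real)) P")
  case True
  define V where "V = (\<lambda>x. (F x, 1::real)) ` P"
  have "card V = card P" and "finite V"
    using True assms(1) by (simp_all add: V_def card_image)
  then have "dependent V"
    using independent_bound[of V] assms(2) by auto
  then obtain u where u_nz: "\<exists>v\<in>V. u v \<noteq> 0" and u_sum: "(\<Sum>v\<in>V. u v *\<^sub>R v) = 0"
    using real_vector.dependent_finite[OF \<open>finite V\<close>] by blast
  have "(\<Sum>x\<in>P. u (F x, 1) *\<^sub>R (F x, 1::real)) = 0"
    using u_sum by (simp add: V_def sum.reindex[OF True])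
  then have "(\<Sum>x\<in>P. u (F x, 1) *\<^sub>R F x) = 0 \<and> (\<Sum>x\<in>P. u (F x, 1)) = 0"
    by (simp add: prod_eq_iff fst_sum snd_sum)
  moreover have "\<exists>x\<in>P. u (F x, 1) \<noteq> 0" using u_nz by (auto simp: V_def)
  ultimately show ?thesis using that[of "\<lambda>x. u (F x, 1)"] by blast
next
  case False
  then obtain x y where "x \<in> P" "y \<in> P" "x \<noteq> y" "F x = F y"
    unfolding inj_on_def by auto
  then show ?thesis
  proof (intro that[of "\<lambda>z. (if z = y then 1 else 0) - (if z = x then 1 else 0)"])
    have "(\<Sum>z\<in>P. ((if z = y then 1 else 0) - (if z = x then 1 else 0)) *\<^sub>R F z)
        = (\<Sum>z\<in>P. (if z = y then F y else 0) - (if z = x then F x else 0))"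
      by (rule sum.cong) auto
    then show "(\<Sum>z\<in>P. ((if z = y then 1 else 0) - (if z = x then 1 else 0)) *\<^sub>R F z) = 0"
      using \<open>x \<in> P\<close> \<open>y \<in> P\<close> \<open>F x = F y\<close> assms(1) by (simp add: sum_subtractf)
  qed (use assms(1) in \<open>auto simp: sum_subtractf\<close>)
qed

text \<open>Moving the weights \<open>w\<close> along \<open>\<mu>\<close> by the largest step that keeps them nonnegative.\<close>

lemma shift_weights_along_dependence:
  fixes F :: "'x \<Rightarrow> 'v::real_vector" and G :: "'x \<Rightarrow> real"
  assumes "finite P" and w_nonneg: "\<forall>x\<in>P. 0 \<le> w x"
    and "sum \<mu> P = 0" and "(\<Sum>x\<in>P. \<mu> x *\<^sub>R F x) = 0" and "0 \<le> (\<Sum>x\<in>P. \<mu> x * G x)"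
    and "\<exists>x\<in>P. \<mu> x < 0"
  obtains w' x0 where "x0 \<in> P" and "w' x0 = 0" and "\<forall>x\<in>P. 0 \<le> w' x"
    and "sum w' P = sum w P" and "(\<Sum>x\<in>P. w' x *\<^sub>R F x) = (\<Sum>x\<in>P. w x *\<^sub>R F x)"
    and "(\<Sum>x\<in>P. w x * G x) \<le> (\<Sum>x\<in>P. w' x * G x)"
proof -
  define N where "N = {x\<in>P. \<mu> x < 0}"
  have "finite N" "N \<noteq> {}" using assms(1,6) by (auto simp: N_def)
  define t where "t = Min ((\<lambda>x. w x / - \<mu> x) ` N)"
  have "t \<in> (\<lambda>x. w x / - \<mu> x) ` N"
    unfolding t_def using \<open>finite N\<close> \<open>N \<noteq> {}\<close> by (intro Min_in) auto
  then obtain x0 where x0: "x0 \<in> N" "t = w x0 / - \<mu> x0" by blast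
  have t_le: "t \<le> w x / - \<mu> x" if "x \<in> N" for x
    using \<open>finite N\<close> that by (auto simp: t_def)
  have "0 \<le> t" using x0 w_nonneg by (auto simp: N_def divide_nonneg_neg)
  define w' where "w' x = w x + t * \<mu> x" for x
  have "w' x0 = 0" using x0 by (auto simp: w'_def N_def field_simps)
  moreover have "0 \<le> w' x" if "x \<in> P" for x
  proof (cases "\<mu> x < 0")
    case True
    then have "t \<le> w x / - \<mu> x" using t_le that by (simp add: N_def)
    then have "t * - \<mu> x \<le> w x" using True by (metis neg_0_less_iff_less pos_le_divide_eq)
    then show ?thesis by (simp add: w'_def)
  next
    case False
    then show ?thesis using \<open>0 \<le> t\<close> w_nonneg that by (simp add: w'_def)
  qed
  moreover have "sum w' P = sum w P + t * sum \<mu> P"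
    by (simp add: w'_def sum.distrib sum_distrib_left)
  moreover have "(\<Sum>x\<in>P. w' x *\<^sub>R F x) = (\<Sum>x\<in>P. w x *\<^sub>R F x) + t *\<^sub>R (\<Sum>x\<in>P. \<mu> x *\<^sub>R F x)"
    by (simp add: w'_def scaleR_add_left sum.distrib scaleR_sum_right)
  moreover have "(\<Sum>x\<in>P. w' x * G x) = (\<Sum>x\<in>P. w x * G x) + t * (\<Sum>x\<in>P. \<mu> x * G x)"
    by (simp add: w'_def distrib_right sum.distrib sum_distrib_left mult.assoc)
  ultimately show ?thesis
    using that[of x0 w'] x0(1) assms(3-5) \<open>0 \<le> t\<close> by (simp add: N_def)
qed

lemma caratheodory_with_objective:
  fixes F :: "'x \<Rightarrow> 'v::euclidean_space" and G :: "'x \<Rightarrow> real"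
  assumes "finite P" and "\<forall>x\<in>P. 0 \<le> w x"
  shows "\<exists>P' w'. P' \<subseteq> P \<and> card P' \<le> DIM('v) + 1 \<and> (\<forall>x\<in>P'. 0 \<le> w' x)
    \<and> sum w' P' = sum w P \<and> (\<Sum>x\<in>P'. w' x *\<^sub>R F x) = (\<Sum>x\<in>P. w x *\<^sub>R F x)
    \<and> (\<Sum>x\<in>P. w x * G x) \<le> (\<Sum>x\<in>P'. w' x * G x)"
  using assms
proof (induction P arbitrary: w rule: finite_psubset_induct)
  case (psubset P)
  show ?case
  proof (cases "card P \<le> DIM('v) + 1")
    case True
    then show ?thesis using psubset.prems by (intro exI[of _ P] exI[of _ w]) simp
  next
    case False
    then obtain \<nu> where \<nu>: "sum \<nu> P = 0" "(\<Sum>x\<in>P. \<nu> x *\<^sub>R F x) = 0" "\<exists>x\<in>P. \<nu> x \<noteq> 0"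
      using exists_affine_dependence[OF psubset.hyps] by (metis not_less)
    text \<open>Flip the sign of \<open>\<nu>\<close> if necessary so that \<open>G\<close> does not decrease; being nonzero
      with zero sum, the direction then has a negative entry.\<close>
    obtain \<mu> where \<mu>: "sum \<mu> P = 0" "(\<Sum>x\<in>P. \<mu> x *\<^sub>R F x) = 0" "0 \<le> (\<Sum>x\<in>P. \<mu> x * G x)"
      "\<exists>x\<in>P. \<mu> x \<noteq> 0"
    proof (cases "0 \<le> (\<Sum>x\<in>P. \<nu> x * G x)")
      case True
      then show ?thesis using that \<nu> by blast
    next
      case False
      then show ?thesis
        using that[of "\<lambda>x. - \<nu> x"] \<nu> by (simp add: sum_negf)
    qed
    have "\<exists>x\<in>P. \<mu> x < 0"
      using sum_nonneg_eq_0_iff[OF psubset.hyps, of \<mu>] \<mu>(1,4) by (meson not_le)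
    then obtain w1 x0 where w1: "x0 \<in> P" "w1 x0 = 0" "\<forall>x\<in>P. 0 \<le> w1 x" "sum w1 P = sum w P"
      "(\<Sum>x\<in>P. w1 x *\<^sub>R F x) = (\<Sum>x\<in>P. w x *\<^sub>R F x)" "(\<Sum>x\<in>P. w x * G x) \<le> (\<Sum>x\<in>P. w1 x * G x)"
      using shift_weights_along_dependence[OF psubset.hyps psubset.prems \<mu>(1-3)] by blast
    have sums_remove: "sum w1 (P - {x0}) = sum w1 P"
      "(\<Sum>x\<in>P - {x0}. w1 x *\<^sub>R F x) = (\<Sum>x\<in>P. w1 x *\<^sub>R F x)"
      "(\<Sum>x\<in>P - {x0}. w1 x * G x) = (\<Sum>x\<in>P. w1 x * G x)"
      using psubset.hyps w1(1,2) by (simp_all add: sum.remove)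
    have "P - {x0} \<subset> P" and "\<forall>x\<in>P - {x0}. 0 \<le> w1 x" using w1(1,3) by blast+
    from psubset.IH[OF this] obtain P' w'
      where "P' \<subseteq> P - {x0}" "card P' \<le> DIM('v) + 1" "\<forall>x\<in>P'. 0 \<le> w' x"
      "sum w' P' = sum w1 (P - {x0})"
      "(\<Sum>x\<in>P'. w' x *\<^sub>R F x) = (\<Sum>x\<in>P - {x0}. w1 x *\<^sub>R F x)"
      "(\<Sum>x\<in>P - {x0}. w1 x * G x) \<le> (\<Sum>x\<in>P'. w' x * G x)"
      by blast
    with w1(4-6) show ?thesis unfolding sums_remove by (intro exI[of _ P'] exI[of _ w']) auto
  qed
qed

lemma convex_hull_image_explicit:
  assumes "y \<in> convex hull (h ` A)"
  obtains P w where "finite P" and "P \<subseteq> A" and "\<forall>x\<in>P. 0 \<le> w x" and "sum w P = 1"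
    and "(\<Sum>x\<in>P. w x *\<^sub>R h x) = y"
proof -
  obtain S u where "finite S" "S \<subseteq> h ` A" "\<forall>v\<in>S. 0 \<le> u v" "sum u S = 1"
    "(\<Sum>v\<in>S. u v *\<^sub>R v) = y"
    using assms unfolding convex_hull_explicit by blast
  moreover obtain P where "P \<subseteq> A" "inj_on h P" "S = h ` P"
    using \<open>S \<subseteq> h ` A\<close> subset_image_inj by metis
  ultimately show ?thesis
    using that[of P "u \<circ> h"] by (simp add: sum.reindex finite_image_iff)
qed

lemma has_bochner_integral_Pair:
  assumes "has_bochner_integral M u a" and "has_bochner_integral M v b"
  shows "has_bochner_integral M (\<lambda>\<omega>. (u \<omega>, v \<omega>)) (a, b)"
proof -
  have "has_bochner_integral M (\<lambda>\<omega>. (u \<omega>, 0)) (a, 0)"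
    using has_bochner_integral_bounded_linear[of "\<lambda>y. (y, 0)", OF _ assms(1)]
    by (simp add: bounded_linear_Pair)
  moreover have "has_bochner_integral M (\<lambda>\<omega>. (0, v \<omega>)) (0, b)"
    using has_bochner_integral_bounded_linear[of "Pair 0", OF _ assms(2)]
    by (simp add: bounded_linear_Pair)
  ultimately have "has_bochner_integral M (\<lambda>\<omega>. (u \<omega>, 0) + (0, v \<omega>)) ((a, 0) + (0, b))"
    by (rule has_bochner_integral_add)
  then show ?thesis by simp
qed

lemma admissible_dist_of_weights:
  assumes "finite P" and "P \<subseteq> A" and "card P \<le> k + 1"
    and "\<forall>x\<in>P. 0 \<le> w x" and "sum w P = 1" and "(\<Sum>x\<in>P. w x *\<^sub>R f x) \<in> B"
  shows "\<exists>p \<in> admissible_dists TYPE('d::finite) k A B f.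
           measure_pmf.expectation p g = (\<Sum>x\<in>P. w x * g x)"
proof -
  define q where "q x = (if x \<in> P then w x else 0)" for x
  have "(\<integral>\<^sup>+x. q x \<partial>count_space UNIV) = (\<Sum>x\<in>P. ennreal (q x))"
    using assms(1) by (intro nn_integral_count_space') (auto simp: q_def)
  also have "\<dots> = 1"
    using assms(4,5) by (simp add: q_def)
  finally have pmf_p: "pmf (embed_pmf q) x = q x" for x
    using assms(4) by (intro pmf_embed_pmf) (auto simp: q_def)
  have set_p: "set_pmf (embed_pmf q) \<subseteq> P"
    by (auto simp: set_pmf_eq pmf_p q_def)
  have "measure_pmf.expectation (embed_pmf q) f = (\<Sum>x\<in>P. w x *\<^sub>R f x)"
    and mean_g: "measure_pmf.expectation (embed_pmf q) g = (\<Sum>x\<in>P. w x * g x)"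
    using set_p by (subst integral_measure_pmf[OF assms(1)]; auto simp: pmf_p q_def)+
  with set_p assms(1-3,6) have "embed_pmf q \<in> admissible_dists TYPE('d) k A B f"
    using finite_subset[OF set_p] card_mono[OF assms(1) set_p]
    by (auto simp: admissible_dists_def)
  with mean_g show ?thesis by blast
qed

lemma le_sup0: "x \<in> S \<Longrightarrow> x \<le> sup0 S"
  by (auto simp: sup0_def intro: Sup_upper)

theorem theorem3:
  fixes M :: "'a measure"
    and A :: "(real^'d::finite) set" and B :: "(real^'k::finite) set"
    and f :: "real^'d \<Rightarrow> real^'k" and g :: "real^'d \<Rightarrow> real"
    and X :: "'a \<Rightarrow> real^'d"
  assumes "prob_space M"
    and "A \<in> sets borel" and "B \<in> sets borel"
    and "f \<in> borel_measurable borel" and "g \<in> borel_measurable borel"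
    and "X \<in> borel_measurable M"
    and "measure M {\<omega> \<in> space M. X \<omega> \<in> A} = 1"
    and "integrable M (\<lambda>\<omega>. f (X \<omega>))"
    and "(\<integral>\<omega>. f (X \<omega>) \<partial>M) \<in> B"
    and "integrable M (\<lambda>\<omega>. g (X \<omega>))"
  shows "ereal (\<integral>\<omega>. g (X \<omega>) \<partial>M)
           \<le> sup0 {ereal (measure_pmf.expectation p g) | p.
                     p \<in> admissible_dists TYPE('d) CARD('k) A B f}"
proof -
  interpret prob_space M by fact
  let ?Ef = "\<integral>\<omega>. f (X \<omega>) \<partial>M" and ?Eg = "\<integral>\<omega>. g (X \<omega>) \<partial>M"
  have "has_bochner_integral M (\<lambda>\<omega>. (f (X \<omega>), g (X \<omega>))) (?Ef, ?Eg)"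
    using assms(8,10) by (intro has_bochner_integral_Pair) (simp_all add: has_bochner_integral_iff)
  then have "integrable M (\<lambda>\<omega>. (f (X \<omega>), g (X \<omega>)))"
    and mean: "(\<integral>\<omega>. (f (X \<omega>), g (X \<omega>)) \<partial>M) = (?Ef, ?Eg)"
    by (simp_all add: has_bochner_integral_iff)
  moreover have "AE \<omega> in M. (f (X \<omega>), g (X \<omega>)) \<in> (\<lambda>x. (f x, g x)) ` A"
    using AE_prob_1[OF assms(7)] by eventually_elim blast
  ultimately have "(?Ef, ?Eg) \<in> convex hull ((\<lambda>x. (f x, g x)) ` A)"
    using integral_in_convex_hull[OF assms(1)] by (simp only: flip: mean)
  then obtain P w where P: "finite P" "P \<subseteq> A" "\<forall>x\<in>P. 0 \<le> w x" "sum w P = 1"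
    and "(\<Sum>x\<in>P. w x *\<^sub>R (f x, g x)) = (?Ef, ?Eg)"
    by (rule convex_hull_image_explicit)
  then have mean_f: "(\<Sum>x\<in>P. w x *\<^sub>R f x) = ?Ef" and mean_g: "(\<Sum>x\<in>P. w x * g x) = ?Eg"
    by (simp_all add: prod_eq_iff fst_sum snd_sum)
  obtain P' w' where "P' \<subseteq> P" "card P' \<le> CARD('k) + 1" "\<forall>x\<in>P'. 0 \<le> w' x" "sum w' P' = 1"
    "(\<Sum>x\<in>P'. w' x *\<^sub>R f x) = ?Ef" "?Eg \<le> (\<Sum>x\<in>P'. w' x * g x)"
    using caratheodory_with_objective[OF P(1,3), of f g] unfolding P(4) mean_f mean_g by auto
  moreover from this have "finite P'" and "P' \<subseteq> A" using P(1,2) finite_subset by blast+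
  ultimately obtain p where p: "p \<in> admissible_dists TYPE('d) CARD('k) A B f"
    and "?Eg \<le> measure_pmf.expectation p g"
    using admissible_dist_of_weights[of P' A "CARD('k)" w' f B g] assms(9) by auto
  then have "ereal ?Eg \<le> ereal (measure_pmf.expectation p g)" by simp
  also have "\<dots> \<le> sup0 {ereal (measure_pmf.expectation p g) | p.
                     p \<in> admissible_dists TYPE('d) CARD('k) A B f}"
    using p by (intro le_sup0) blast
  finally show ?thesis .
qed

end
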